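(* For every sequent $\Gamma\Rightarrow\Delta$: if $\mathsf{Grz_{Seq}}+\mathsf{cut}\vdash\Gamma\Rightarrow\Delta$, then $\mathsf{Grz_{Seq}}\vdash\Gamma\Rightarrow\Delta$.
   Context: Formulas are built from $\bot$ and atomic propositions using $\to$ and $\Box$. A sequent is $\Gamma\Rightarrow\Delta$ with $\Gamma,\Delta$ finite multisets of formulas; $\Box\Pi$ denotes the multiset $\{\Box B:B\in\Pi\}$. The (ordinary, finite-proof) sequent calculus $\mathsf{Grz_{Seq}}$ has initial sequents $\Gamma,A\Rightarrow A,\Delta$ (any formula $A$) and $\Gamma,\bot\Rightarrow\Delta$, and rules: $(\to_L)$ from $\Gamma,B\Rightarrow\Delta$ and $\Gamma\Rightarrow A,\Delta$ infer $\Gamma,A\to B\Rightarrow\Delta$; $(\to_R)$ from $\Gamma,A\Rightarrow B,\Delta$ infer $\Gamma\Rightarrow A\to B,\Delta$; $(\mathsf{refl})$ from $\Gamma,B,\Box B\Rightarrow\Delta$ infer $\Gamma,\Box B\Rightarrow\Delta$; $(\Box_{\mathsf{Grz}})$ from $\Box\Pi,\Box(A\to\Box A)\Rightarrow A$ infer $\Gamma,\Box\Pi\Rightarrow\Box A,\Delta$. The system $\mathsf{Grz_{Seq}}+\mathsf{cut}$ adds the rule $(\mathsf{cut})$: from $\Gamma\Rightarrow A,\Delta$ and $\Gamma,A\Rightarrow\Delta$ infer $\Gamma\Rightarrow\Delta$. Provability means existence of a finite derivation tree. *)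

theory Defs
  imports Main "HOL-Library.Multiset"
begin

datatype 'a fm = Bot | Atom 'a | Imp "'a fm" "'a fm" | Box "'a fm"

inductive grz :: "bool \<Rightarrow> 'a fm multiset \<Rightarrow> 'a fm multiset \<Rightarrow> bool" for c :: bool where
  ax: "grz c (\<Gamma> + {#A#}) ({#A#} + \<Delta>)"
| botL: "grz c (\<Gamma> + {#Bot#}) \<Delta>"
| impL: "grz c (\<Gamma> + {#B#}) \<Delta> \<Longrightarrow> grz c \<Gamma> ({#A#} + \<Delta>)
         \<Longrightarrow> grz c (\<Gamma> + {#Imp A B#}) \<Delta>"
| impR: "grz c (\<Gamma> + {#A#}) ({#B#} + \<Delta>) \<Longrightarrow> grz c \<Gamma> ({#Imp A B#} + \<Delta>)"
| refl: "grz c (\<Gamma> + {#B#} + {#Box B#}) \<Delta> \<Longrightarrow> grz c (\<Gamma> + {#Box B#}) \<Delta>"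
| boxGrz: "grz c (image_mset Box \<Pi> + {#Box (Imp A (Box A))#}) {#A#}
         \<Longrightarrow> grz c (\<Gamma> + image_mset Box \<Pi>) ({#Box A#} + \<Delta>)"
| cut: "c \<Longrightarrow> grz c \<Gamma> ({#A#} + \<Delta>) \<Longrightarrow> grz c (\<Gamma> + {#A#}) \<Delta> \<Longrightarrow> grz c \<Gamma> \<Delta>"

abbreviation Grz_Seq :: "'a fm multiset \<Rightarrow> 'a fm multiset \<Rightarrow> bool" where
  "Grz_Seq \<equiv> grz False"

abbreviation Grz_Seq_cut :: "'a fm multiset \<Rightarrow> 'a fm multiset \<Rightarrow> bool" where
  "Grz_Seq_cut \<equiv> grz True"

end

theory Submission
  imports Defs
begin

(* Cut elimination is proved semantically. Both calculi are sound for Grzegorczyk frames: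
   reflexive, transitive frames without infinite chains of proper successors. Conversely, an
   underivable cut-free sequent is refuted in a finite model whose worlds are saturated pairs
   (G, D) of formulas drawn from the subformulas of the sequent together with A \<rightarrow> \<box>A and
   \<box>(A \<rightarrow> \<box>A) for every subformula \<box>A. A proper successor has strictly more boxed formulas,
   so the frame is converse well-founded. If a world puts \<box>A on the right, then either it
   contains \<box>(A \<rightarrow> \<box>A) on the left, which forces A onto its right, or saturating the premise
   \<box>\<Pi>, \<box>(A \<rightarrow> \<box>A) \<Rightarrow> A of the Grz box rule yields a proper successor refuting A. *)

lemma grz_weaken:
  assumes "grz c \<Gamma> \<Delta>"
  shows "grz c (\<Gamma> + \<Gamma>') (\<Delta> + \<Delta>')"
  using assms
proof (induction arbitrary: \<Gamma>' \<Delta>' rule: grz.induct)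
  case (ax \<Gamma> A \<Delta>)
  show ?case using grz.ax[of c "\<Gamma> + \<Gamma>'" A "\<Delta> + \<Delta>'"] by (simp add: ac_simps)
next
  case (botL \<Gamma> \<Delta>)
  show ?case using grz.botL[of c "\<Gamma> + \<Gamma>'" "\<Delta> + \<Delta>'"] by (simp add: ac_simps)
next
  case (impL \<Gamma> B \<Delta> A)
  show ?case
    using grz.impL[of c "\<Gamma> + \<Gamma>'" B "\<Delta> + \<Delta>'" A] impL.IH[of \<Gamma>' \<Delta>'] by (simp add: ac_simps)
next
  case (impR \<Gamma> A B \<Delta>)
  show ?case
    using grz.impR[of c "\<Gamma> + \<Gamma>'" A B "\<Delta> + \<Delta>'"] impR.IH[of \<Gamma>' \<Delta>'] by (simp add: ac_simps)
next
  case (refl \<Gamma> B \<Delta>)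
  show ?case
    using grz.refl[of c "\<Gamma> + \<Gamma>'" B "\<Delta> + \<Delta>'"] refl.IH[of \<Gamma>' \<Delta>']
    by (simp add: ac_simps add_mset_commute)
next
  case (boxGrz \<Pi> A \<Gamma> \<Delta>)
  show ?case
    using grz.boxGrz[OF boxGrz.hyps, of "\<Gamma> + \<Gamma>'" "\<Delta> + \<Delta>'"] by (simp add: ac_simps)
next
  case (cut \<Gamma> A \<Delta>)
  show ?case
    using grz.cut[OF cut.hyps(1), of "\<Gamma> + \<Gamma>'" A "\<Delta> + \<Delta>'"] cut.IH[of \<Gamma>' \<Delta>']
    by (simp add: ac_simps)
qed

lemma grz_mono:
  assumes "grz c \<Gamma> \<Delta>" "\<Gamma> \<subseteq># \<Gamma>'" "\<Delta> \<subseteq># \<Delta>'"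
  shows "grz c \<Gamma>' \<Delta>'"
  using grz_weaken[OF assms(1), of "\<Gamma>' - \<Gamma>" "\<Delta>' - \<Delta>"] assms(2,3)
  by (simp add: subset_mset.add_diff_inverse)

lemma grz_ax_mem: "A \<in># \<Gamma> \<Longrightarrow> A \<in># \<Delta> \<Longrightarrow> grz c \<Gamma> \<Delta>"
  using grz.ax[of c "\<Gamma> - {#A#}" A "\<Delta> - {#A#}"] by simp

lemma grz_Bot_mem: "Bot \<in># \<Gamma> \<Longrightarrow> grz c \<Gamma> \<Delta>"
  using grz.botL[of c "\<Gamma> - {#Bot#}" \<Delta>] by simp

fun sat :: "('w \<Rightarrow> 'w \<Rightarrow> bool) \<Rightarrow> ('w \<Rightarrow> 'a \<Rightarrow> bool) \<Rightarrow> 'w \<Rightarrow> 'a fm \<Rightarrow> bool" where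
  "sat R V w Bot = False"
| "sat R V w (Atom p) = V w p"
| "sat R V w (Imp A B) = (sat R V w A \<longrightarrow> sat R V w B)"
| "sat R V w (Box A) = (\<forall>v. R w v \<longrightarrow> sat R V v A)"

definition grz_frame :: "'w set \<Rightarrow> ('w \<Rightarrow> 'w \<Rightarrow> bool) \<Rightarrow> bool" where
  "grz_frame W R \<longleftrightarrow> (\<forall>w v. R w v \<longrightarrow> w \<in> W \<and> v \<in> W) \<and> (\<forall>w\<in>W. R w w) \<and> transp R
     \<and> wfp (\<lambda>v w. R w v \<and> w \<noteq> v)"

lemma sat_Box_in_grz_frame:
  assumes frame: "grz_frame W R"
    and step: "\<And>v. R w v \<Longrightarrow> (\<forall>u. R v u \<longrightarrow> sat R V u (Imp A (Box A))) \<Longrightarrow> sat R V v A"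
  shows "sat R V w (Box A)"
proof (rule ccontr)
  assume "\<not> sat R V w (Box A)"
  then obtain v0 where v0: "v0 \<in> {v. R w v \<and> \<not> sat R V v A}" by auto
  have wf: "wfp (\<lambda>v w. R w v \<and> w \<noteq> v)" and trans: "transp R"
    using frame by (simp_all add: grz_frame_def)
  \<comment> \<open>an R-maximal world refuting A\<close>
  have "\<exists>v\<in>{v. R w v \<and> \<not> sat R V v A}.
      \<forall>u. R v u \<and> v \<noteq> u \<longrightarrow> u \<notin> {v. R w v \<and> \<not> sat R V v A}"
    using wfp_eq_minimal[THEN iffD1, OF wf, rule_format, OF v0] by simp
  then obtain v where v: "R w v" "\<not> sat R V v A"
    and top: "\<And>u. R v u \<Longrightarrow> v \<noteq> u \<Longrightarrow> R w u \<Longrightarrow> sat R V u A"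
    by blast
  have "sat R V u (Box A)" if vu: "R v u" and "sat R V u A" for u
  proof (clarsimp)
    fix u' assume uu': "R u u'"
    show "sat R V u' A"
    proof (rule ccontr)
      assume "\<not> sat R V u' A"
      moreover have "R v u'" "R w u'" using trans vu uu' v(1) by (blast dest: transpD)+
      ultimately have "u' = v" using top by blast
      then have "u = v"
        using wfp_imp_asymp[OF wf] vu uu' by (auto dest: asympD)
      with that v(2) show False by simp
    qed
  qed
  then have "sat R V v A" using step[OF v(1)] by simp
  with v(2) show False ..
qed

lemma grz_sound:
  assumes "grz c \<Gamma> \<Delta>" "grz_frame W R" "w \<in> W" "\<forall>A\<in>#\<Gamma>. sat R V w A"
  shows "\<exists>B\<in>#\<Delta>. sat R V w B"
  using assms(1,3,4)
proof (induction arbitrary: w rule: grz.induct)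
  case (ax \<Gamma> A \<Delta>)
  then show ?case by auto
next
  case (botL \<Gamma> \<Delta>)
  then show ?case by auto
next
  case (impL \<Gamma> B \<Delta> A)
  then show ?case by fastforce
next
  case (impR \<Gamma> A B \<Delta>)
  then show ?case by fastforce
next
  case (refl \<Gamma> B \<Delta>)
  then show ?case using assms(2) by (fastforce simp: grz_frame_def)
next
  case (cut \<Gamma> A \<Delta>)
  then show ?case by fastforce
next
  case (boxGrz \<Pi> A \<Gamma> \<Delta>)
  have "sat R V w (Box A)"
  proof (rule sat_Box_in_grz_frame[OF assms(2)])
    fix v assume "R w v" "\<forall>u. R v u \<longrightarrow> sat R V u (Imp A (Box A))"
    moreover have "v \<in> W" using \<open>R w v\<close> assms(2) by (simp add: grz_frame_def)
    moreover have "sat R V v (Box B)" if "B \<in># \<Pi>" for B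
    proof -
      have "Box B \<in># \<Gamma> + image_mset Box \<Pi>" using that by simp
      then have "sat R V w (Box B)" using boxGrz.prems(2) by blast
      moreover have "transp R" using assms(2) by (simp add: grz_frame_def)
      ultimately show ?thesis using \<open>R w v\<close> by (auto dest: transpD)
    qed
    ultimately show "sat R V v A" using boxGrz.IH by auto
  qed
  then show ?case by simp
qed

definition sequent_size :: "'a fm multiset \<Rightarrow> 'a fm multiset \<Rightarrow> nat" where
  "sequent_size \<Gamma> \<Delta> = (\<Sum>X\<in>#\<Gamma> + \<Delta>. size X)"

lemma ex_mset_image_Box: "\<exists>\<Pi>. image_mset Box \<Pi> = {#X \<in># \<Gamma>. X \<in> range Box#}"
proof (induction \<Gamma>)
  case (add X \<Gamma>)
  then obtain \<Pi> where "image_mset Box \<Pi> = {#X \<in># \<Gamma>. X \<in> range Box#}" by blast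
  then show ?case by (cases "X \<in> range Box") (auto intro: exI[of _ "add_mset _ \<Pi>"])
qed simp

fun subformulas :: "'a fm \<Rightarrow> 'a fm set" where
  "subformulas Bot = {Bot}"
| "subformulas (Atom p) = {Atom p}"
| "subformulas (Imp A B) = insert (Imp A B) (subformulas A \<union> subformulas B)"
| "subformulas (Box A) = insert (Box A) (subformulas A)"

lemma finite_subformulas: "finite (subformulas A)"
  by (induction A) auto

lemma subformulas_refl: "A \<in> subformulas A"
  by (cases A) auto

lemma subformulas_trans: "B \<in> subformulas A \<Longrightarrow> subformulas B \<subseteq> subformulas A"
  by (induction A) auto

locale grz_countermodel =
  fixes S :: "'a fm set"
  assumes finite_S: "finite S"
begin

definition Sub :: "'a fm set" where
  "Sub = (\<Union>A\<in>S. subformulas A)"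

definition Sub_Grz :: "'a fm set" where
  "Sub_Grz = Sub \<union> (\<lambda>A. Imp A (Box A)) ` (Box -` Sub) \<union> (\<lambda>A. Box (Imp A (Box A))) ` (Box -` Sub)"

lemma finite_Sub: "finite Sub"
  unfolding Sub_def using finite_S finite_subformulas by blast

lemma finite_Sub_Grz: "finite Sub_Grz"
proof -
  have "finite (Box -` Sub)" using finite_Sub by (rule finite_vimageI) (simp add: inj_def)
  then show ?thesis unfolding Sub_Grz_def using finite_Sub by simp
qed

lemma S_subset_Sub: "S \<subseteq> Sub"
  unfolding Sub_def using subformulas_refl by blast

lemma Sub_subset_Sub_Grz: "Sub \<subseteq> Sub_Grz"
  unfolding Sub_Grz_def by blast

lemma Imp_in_Sub: "Imp A B \<in> Sub \<Longrightarrow> A \<in> Sub \<and> B \<in> Sub"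
  unfolding Sub_def using subformulas_trans subformulas_refl by fastforce

lemma Box_in_Sub: "Box A \<in> Sub \<Longrightarrow> A \<in> Sub"
  unfolding Sub_def using subformulas_trans subformulas_refl by fastforce

lemma Imp_in_Sub_Grz: "Imp A B \<in> Sub_Grz \<Longrightarrow> A \<in> Sub \<and> B \<in> Sub_Grz"
  unfolding Sub_Grz_def using Imp_in_Sub Box_in_Sub by blast

lemma Box_in_Sub_Grz: "Box A \<in> Sub_Grz \<Longrightarrow> A \<in> Sub_Grz"
  unfolding Sub_Grz_def using Box_in_Sub by blast

lemma Box_Grz_in_Sub_Grz: "Box A \<in> Sub \<Longrightarrow> Box (Imp A (Box A)) \<in> Sub_Grz"
  unfolding Sub_Grz_def by blast

text \<open>G and D collect the formulas put on the left and on the right during saturation;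
  the underivable sequent \<Gamma> \<Rightarrow> \<Delta> still contains all of them except implications that
  have already been decomposed. The sequent is kept as a multiset, with its multiplicities,
  so that the argument does not rely on admissibility of contraction.\<close>

definition tracks :: "'a fm multiset \<Rightarrow> 'a fm multiset \<Rightarrow> 'a fm set \<Rightarrow> 'a fm set \<Rightarrow> bool" where
  "tracks \<Gamma> \<Delta> G D \<longleftrightarrow> set_mset \<Gamma> \<subseteq> G \<and> G \<subseteq> Sub_Grz \<and> set_mset \<Delta> \<subseteq> D \<and> D \<subseteq> Sub
     \<and> (\<forall>X\<in>G. X \<in># \<Gamma> \<or> (\<exists>A B. X = Imp A B \<and> (A \<in> D \<or> B \<in> G)))
     \<and> (\<forall>X\<in>D. X \<in># \<Delta> \<or> (\<exists>A B. X = Imp A B \<and> A \<in> G \<and> B \<in> D))"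

lemma tracks_impL_left:
  assumes "tracks (add_mset (Imp A B) \<Gamma>) \<Delta> G D"
  shows "tracks (add_mset B \<Gamma>) \<Delta> (insert B G) D"
proof -
  have "B \<in> Sub_Grz" using assms Imp_in_Sub_Grz by (auto simp: tracks_def)
  with assms show ?thesis unfolding tracks_def by auto
qed

lemma tracks_impL_right:
  assumes "tracks (add_mset (Imp A B) \<Gamma>) \<Delta> G D"
  shows "tracks \<Gamma> (add_mset A \<Delta>) G (insert A D)"
proof -
  have "A \<in> Sub" using assms Imp_in_Sub_Grz by (auto simp: tracks_def)
  with assms show ?thesis unfolding tracks_def by auto
qed

lemma tracks_impR:
  assumes "tracks \<Gamma> (add_mset (Imp A B) \<Delta>) G D"
  shows "tracks (add_mset A \<Gamma>) (add_mset B \<Delta>) (insert A G) (insert B D)"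
proof -
  have "Imp A B \<in> Sub" using assms by (auto simp: tracks_def)
  then have "A \<in> Sub_Grz" "B \<in> Sub" using Imp_in_Sub Sub_subset_Sub_Grz by blast+
  with assms show ?thesis unfolding tracks_def by (intro conjI; auto)
qed

lemma tracks_refl:
  assumes "tracks (add_mset (Box B) \<Gamma>) \<Delta> G D"
  shows "tracks (add_mset B (add_mset (Box B) \<Gamma>)) \<Delta> (insert B G) D"
proof -
  have "B \<in> Sub_Grz" using assms Box_in_Sub_Grz by (auto simp: tracks_def)
  with assms show ?thesis unfolding tracks_def by auto
qed

definition unexplored :: "'a fm set \<Rightarrow> 'a fm set \<Rightarrow> nat" where
  "unexplored G D = card (Sub_Grz - G) + card (Sub - D)"

lemma unexplored_mono: "G \<subseteq> G' \<Longrightarrow> D \<subseteq> D' \<Longrightarrow> unexplored G' D' \<le> unexplored G D"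
  unfolding unexplored_def
  by (intro add_mono card_mono finite_Diff finite_Sub finite_Sub_Grz Diff_mono subset_refl)

lemma unexplored_insert_less:
  assumes "B \<in> Sub_Grz" "B \<notin> G"
  shows "unexplored (insert B G) D < unexplored G D"
proof -
  have "Sub_Grz - insert B G = Sub_Grz - G - {B}" by blast
  moreover have "card (Sub_Grz - G - {B}) < card (Sub_Grz - G)"
    using assms finite_Sub_Grz by (intro card_Diff1_less) auto
  ultimately show ?thesis unfolding unexplored_def by simp
qed

definition worlds :: "('a fm set \<times> 'a fm set) set" where
  "worlds = {(G, D). \<exists>\<Gamma> \<Delta>. tracks \<Gamma> \<Delta> G D \<and> \<not> Grz_Seq \<Gamma> \<Delta>
     \<and> (\<forall>A B. Imp A B \<notin># \<Gamma> + \<Delta>) \<and> (\<forall>B. Box B \<in># \<Gamma> \<longrightarrow> B \<in> G)}"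

lemma saturation_step:
  assumes tracks: "tracks \<Gamma> \<Delta> G D" and underivable: "\<not> Grz_Seq \<Gamma> \<Delta>"
    and "(G, D) \<notin> worlds"
  obtains \<Gamma>' \<Delta>' G' D' where "tracks \<Gamma>' \<Delta>' G' D'" "\<not> Grz_Seq \<Gamma>' \<Delta>'" "G \<subseteq> G'" "D \<subseteq> D'"
    "unexplored G' D' < unexplored G D \<or> sequent_size \<Gamma>' \<Delta>' < sequent_size \<Gamma> \<Delta>"
proof -
  have "(\<exists>A B. Imp A B \<in># \<Gamma>) \<or> (\<exists>A B. Imp A B \<in># \<Delta>) \<or> (\<exists>B. Box B \<in># \<Gamma> \<and> B \<notin> G)"
  proof (rule ccontr)
    assume "\<not> ?thesis"
    then have "(\<forall>A B. Imp A B \<notin># \<Gamma> + \<Delta>) \<and> (\<forall>B. Box B \<in># \<Gamma> \<longrightarrow> B \<in> G)" by auto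
    then have "(G, D) \<in> worlds" using tracks underivable unfolding worlds_def by blast
    with \<open>(G, D) \<notin> worlds\<close> show False ..
  qed
  then consider (impL) A B \<Gamma>0 where "\<Gamma> = add_mset (Imp A B) \<Gamma>0"
    | (impR) A B \<Delta>0 where "\<Delta> = add_mset (Imp A B) \<Delta>0"
    | (refl) B \<Gamma>0 where "\<Gamma> = add_mset (Box B) \<Gamma>0" "B \<notin> G"
    by (auto dest: multi_member_split)
  then show thesis
  proof cases
    case impL
    then consider "\<not> Grz_Seq (add_mset B \<Gamma>0) \<Delta>" | "\<not> Grz_Seq \<Gamma>0 (add_mset A \<Delta>)"
      using underivable grz.impL[of False \<Gamma>0 B \<Delta> A] by auto
    then show thesis
    proof cases
      case 1
      moreover have "tracks (add_mset B \<Gamma>0) \<Delta> (insert B G) D"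
        using tracks_impL_left tracks impL by simp
      moreover have "sequent_size (add_mset B \<Gamma>0) \<Delta> < sequent_size \<Gamma> \<Delta>"
        using impL by (simp add: sequent_size_def)
      ultimately show thesis using that by blast
    next
      case 2
      moreover have "tracks \<Gamma>0 (add_mset A \<Delta>) G (insert A D)"
        using tracks_impL_right tracks impL by simp
      moreover have "sequent_size \<Gamma>0 (add_mset A \<Delta>) < sequent_size \<Gamma> \<Delta>"
        using impL by (simp add: sequent_size_def)
      ultimately show thesis using that by blast
    qed
  next
    case impR
    then have "\<not> Grz_Seq (add_mset A \<Gamma>) (add_mset B \<Delta>0)"
      using underivable grz.impR[of False \<Gamma> A B \<Delta>0] by auto
    moreover have "tracks (add_mset A \<Gamma>) (add_mset B \<Delta>0) (insert A G) (insert B D)"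
      using tracks_impR tracks impR by simp
    moreover have "sequent_size (add_mset A \<Gamma>) (add_mset B \<Delta>0) < sequent_size \<Gamma> \<Delta>"
      using impR by (simp add: sequent_size_def)
    ultimately show thesis using that by blast
  next
    case refl
    then have "\<not> Grz_Seq (add_mset B \<Gamma>) \<Delta>"
      using underivable grz.refl[of False \<Gamma>0 B \<Delta>] by (auto simp: add_mset_commute)
    moreover have "tracks (add_mset B \<Gamma>) \<Delta> (insert B G) D"
      using tracks_refl tracks refl by simp
    moreover have "B \<in> Sub_Grz"
      using tracks refl Box_in_Sub_Grz by (auto simp: tracks_def)
    then have "unexplored (insert B G) D < unexplored G D"
      using unexplored_insert_less refl(2) by blast
    ultimately show thesis using that by blast
  qed
qed

lemma saturation:
  assumes "tracks \<Gamma> \<Delta> G D" "\<not> Grz_Seq \<Gamma> \<Delta>"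
  shows "\<exists>G' D'. (G', D') \<in> worlds \<and> G \<subseteq> G' \<and> D \<subseteq> D'"
  using wf_lex_prod[OF wf_less_than wf_less_than] assms
proof (induction "(unexplored G D, sequent_size \<Gamma> \<Delta>)" arbitrary: \<Gamma> \<Delta> G D rule: wf_induct_rule)
  case less
  show ?case
  proof (cases "(G, D) \<in> worlds")
    case False
    then obtain \<Gamma>' \<Delta>' G' D' where step: "tracks \<Gamma>' \<Delta>' G' D'" "\<not> Grz_Seq \<Gamma>' \<Delta>'"
      and grow: "G \<subseteq> G'" "D \<subseteq> D'"
      and decrease: "unexplored G' D' < unexplored G D \<or> sequent_size \<Gamma>' \<Delta>' < sequent_size \<Gamma> \<Delta>"
      using saturation_step less.prems by blast
    have "unexplored G' D' \<le> unexplored G D" using unexplored_mono grow .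
    with decrease have "((unexplored G' D', sequent_size \<Gamma>' \<Delta>'), (unexplored G D, sequent_size \<Gamma> \<Delta>))
        \<in> less_than <*lex*> less_than"
      by auto
    then obtain G'' D'' where "(G'', D'') \<in> worlds" "G' \<subseteq> G''" "D' \<subseteq> D''"
      using less.hyps step by blast
    with grow show ?thesis by blast
  qed blast
qed

definition accessible :: "'a fm set \<times> 'a fm set \<Rightarrow> 'a fm set \<times> 'a fm set \<Rightarrow> bool" where
  "accessible w v \<longleftrightarrow> w \<in> worlds \<and> v \<in> worlds \<and> (w = v \<or> fst w \<inter> range Box \<subset> fst v \<inter> range Box)"

definition val :: "'a fm set \<times> 'a fm set \<Rightarrow> 'a \<Rightarrow> bool" where
  "val w p \<longleftrightarrow> Atom p \<in> fst w"

lemma worlds_subset_Sub_Grz: "w \<in> worlds \<Longrightarrow> fst w \<subseteq> Sub_Grz"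
  unfolding worlds_def tracks_def by auto

lemma worlds_ImpL: "(G, D) \<in> worlds \<Longrightarrow> Imp A B \<in> G \<Longrightarrow> A \<in> D \<or> B \<in> G"
  unfolding worlds_def tracks_def by fastforce

lemma worlds_ImpR: "(G, D) \<in> worlds \<Longrightarrow> Imp A B \<in> D \<Longrightarrow> A \<in> G \<and> B \<in> D"
  unfolding worlds_def tracks_def by fastforce

lemma worlds_BoxL: "(G, D) \<in> worlds \<Longrightarrow> Box A \<in> G \<Longrightarrow> A \<in> G"
  unfolding worlds_def tracks_def by fastforce

lemma worlds_Bot: "(G, D) \<in> worlds \<Longrightarrow> Bot \<notin> G"
  unfolding worlds_def tracks_def using grz_Bot_mem by fastforce

lemma worlds_disjoint: "(G, D) \<in> worlds \<Longrightarrow> X \<in> G \<Longrightarrow> X \<in> D \<Longrightarrow> \<exists>A B. X = Imp A B"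
  unfolding worlds_def tracks_def using grz_ax_mem by fastforce

lemma worlds_BoxR:
  assumes "(G, D) \<in> worlds" "Box A \<in> D"
  shows "\<exists>G' D'. (G', D') \<in> worlds \<and> G \<inter> range Box \<subseteq> G' \<and> Box (Imp A (Box A)) \<in> G' \<and> A \<in> D'"
proof -
  obtain \<Gamma> \<Delta> where tracks: "tracks \<Gamma> \<Delta> G D" and underivable: "\<not> Grz_Seq \<Gamma> \<Delta>"
    using assms(1) unfolding worlds_def by blast
  obtain \<Pi> where \<Pi>: "image_mset Box \<Pi> = {#X \<in># \<Gamma>. X \<in> range Box#}"
    using ex_mset_image_Box by blast
  define \<Gamma>' where "\<Gamma>' = add_mset (Box (Imp A (Box A))) (image_mset Box \<Pi>)"
  have boxes: "set_mset (image_mset Box \<Pi>) = set_mset \<Gamma> \<inter> range Box"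
    using \<Pi> by auto
  have "Box A \<in># \<Delta>" "Box A \<in> Sub" using tracks assms(2) unfolding tracks_def by blast+
  have "\<not> Grz_Seq \<Gamma>' {#A#}"
  proof
    assume "Grz_Seq \<Gamma>' {#A#}"
    then have "Grz_Seq (image_mset Box \<Pi>) {#Box A#}"
      using grz.boxGrz[of False \<Pi> A "{#}" "{#}"] unfolding \<Gamma>'_def by simp
    moreover have "image_mset Box \<Pi> \<subseteq># \<Gamma>" using \<Pi> by simp
    moreover have "{#Box A#} \<subseteq># \<Delta>" using \<open>Box A \<in># \<Delta>\<close> by simp
    ultimately show False using underivable grz_mono by blast
  qed
  moreover have "tracks \<Gamma>' {#A#} (set_mset \<Gamma>') {A}"
    using tracks boxes Box_in_Sub[OF \<open>Box A \<in> Sub\<close>] Box_Grz_in_Sub_Grz[OF \<open>Box A \<in> Sub\<close>]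
    unfolding tracks_def \<Gamma>'_def by auto
  ultimately obtain G' D' where "(G', D') \<in> worlds" "set_mset \<Gamma>' \<subseteq> G'" "A \<in> D'"
    using saturation by blast
  moreover have "G \<inter> range Box \<subseteq> set_mset \<Gamma>'"
    using tracks boxes unfolding tracks_def \<Gamma>'_def by fastforce
  ultimately have "(G', D') \<in> worlds \<and> G \<inter> range Box \<subseteq> G' \<and> Box (Imp A (Box A)) \<in> G' \<and> A \<in> D'"
    unfolding \<Gamma>'_def by auto
  then show ?thesis by blast
qed

lemma grz_frame_accessible: "grz_frame worlds accessible"
  unfolding grz_frame_def
proof (intro conjI)
  show "transp accessible"
    unfolding accessible_def by (rule transpI) (auto dest: psubset_trans)
  show "wfp (\<lambda>v w. accessible w v \<and> w \<noteq> v)"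
  proof (rule wfp_if_convertible_to_nat)
    fix v w assume "accessible w v \<and> w \<noteq> v"
    then have "fst w \<inter> range Box \<subset> fst v \<inter> range Box" "fst v \<subseteq> Sub_Grz"
      unfolding accessible_def using worlds_subset_Sub_Grz by auto
    then show "card (Sub_Grz \<inter> range Box - fst v) < card (Sub_Grz \<inter> range Box - fst w)"
      using finite_Sub_Grz by (intro psubset_card_mono) auto
  qed
qed (auto simp: accessible_def)

lemma truth_lemma:
  assumes "(G, D) \<in> worlds"
  shows "(A \<in> G \<longrightarrow> sat accessible val (G, D) A) \<and> (A \<in> D \<longrightarrow> \<not> sat accessible val (G, D) A)"
  using assms
proof (induction A arbitrary: G D)
  case Bot
  then show ?case using worlds_Bot by auto
next
  case (Atom p)
  then show ?case using worlds_disjoint[of G D "Atom p"] by (auto simp: val_def)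
next
  case (Imp A B)
  show ?case
    using Imp.IH(1)[OF Imp.prems] Imp.IH(2)[OF Imp.prems] worlds_ImpL[OF Imp.prems]
      worlds_ImpR[OF Imp.prems]
    by auto
next
  case (Box A)
  have "sat accessible val (G, D) (Box A)" if "Box A \<in> G"
    unfolding sat.simps
  proof (intro allI impI)
    fix v assume acc: "accessible (G, D) v"
    obtain G' D' where v: "v = (G', D')" by fastforce
    have "(G', D') \<in> worlds" using acc v by (simp add: accessible_def)
    moreover have "Box A \<in> G'" using acc v that by (auto simp: accessible_def)
    ultimately show "sat accessible val v A" using Box.IH worlds_BoxL v by blast
  qed
  moreover have "\<not> sat accessible val (G, D) (Box A)" if BoxD: "Box A \<in> D"
  proof (cases "Box (Imp A (Box A)) \<in> G")
    case True
    then have "A \<in> D \<or> Box A \<in> G" using worlds_BoxL worlds_ImpL Box.prems by blast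
    then have "A \<in> D" using worlds_disjoint Box.prems BoxD by blast
    then have "\<not> sat accessible val (G, D) A" using Box.IH Box.prems by blast
    moreover have "accessible (G, D) (G, D)" using Box.prems by (simp add: accessible_def)
    ultimately show ?thesis by auto
  next
    case False
    obtain G' D' where world': "(G', D') \<in> worlds" and "G \<inter> range Box \<subseteq> G'"
      and "Box (Imp A (Box A)) \<in> G'" and "A \<in> D'"
      using worlds_BoxR[OF Box.prems BoxD] by blast
    with False Box.prems have "accessible (G, D) (G', D')" by (auto simp: accessible_def)
    moreover have "\<not> sat accessible val (G', D') A" using Box.IH[OF world'] \<open>A \<in> D'\<close> by blast
    ultimately show ?thesis by auto
  qed
  ultimately show ?case by blast
qed

lemma countermodel:
  assumes "set_mset \<Gamma> \<subseteq> S" "set_mset \<Delta> \<subseteq> S" "\<not> Grz_Seq \<Gamma> \<Delta>"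
  shows "\<exists>w\<in>worlds. (\<forall>A\<in>#\<Gamma>. sat accessible val w A) \<and> (\<forall>B\<in>#\<Delta>. \<not> sat accessible val w B)"
proof -
  have "tracks \<Gamma> \<Delta> (set_mset \<Gamma>) (set_mset \<Delta>)"
    using assms(1,2) S_subset_Sub Sub_subset_Sub_Grz unfolding tracks_def by auto
  then obtain G D where "(G, D) \<in> worlds" "set_mset \<Gamma> \<subseteq> G" "set_mset \<Delta> \<subseteq> D"
    using saturation assms(3) by blast
  then show ?thesis using truth_lemma by blast
qed

end

theorem theorem2p2:
  fixes \<Gamma> \<Delta> :: "'a fm multiset"
  assumes "Grz_Seq_cut \<Gamma> \<Delta>"
  shows "Grz_Seq \<Gamma> \<Delta>"
proof (rule ccontr)
  assume "\<not> Grz_Seq \<Gamma> \<Delta>"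
  interpret grz_countermodel "set_mset \<Gamma> \<union> set_mset \<Delta>"
    by unfold_locales simp
  obtain w where "w \<in> worlds" "\<forall>A\<in>#\<Gamma>. sat accessible val w A" "\<forall>B\<in>#\<Delta>. \<not> sat accessible val w B"
    using countermodel \<open>\<not> Grz_Seq \<Gamma> \<Delta>\<close> by blast
  then show False using grz_sound[OF assms grz_frame_accessible] by blast
qed

end
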